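(* Let $\mu_1,\mu_2$, $P_{n,m}$, the nearest neighbor recurrence coefficients $a_{n,m},b_{n,m},c_{n,m},d_{n,m}$ and the marginal recurrence coefficients $a_n^2(\mu_i),b_n(\mu_i)$ be as in the context, and suppose $c_{n,m}\neq d_{n,m}$ for all $n,m\ge 0$. Then the nearest neighbor recurrence coefficients can be computed recursively (by induction on $n+m$) from the relations \begin{align*} d_{n+1,m}-d_{n,m} &= c_{n,m+1}-c_{n,m}, && n,m\ge0,\\ a_{n+1,m}+b_{n+1,m}-(a_{n,m+1}+b_{n,m+1}) &= d_{n+1,m}c_{n,m}-d_{n,m}c_{n,m+1}, && n,m\ge 0,\\ \frac{a_{n,m+1}}{a_{n,m}} &= \frac{c_{n,m}-d_{n,m}}{c_{n-1,m}-d_{n-1,m}}, && n\ge1,\ m\ge0,\\ \frac{b_{n+1,m}}{b_{n,m}} &= \frac{c_{n,m}-d_{n,m}}{c_{n,m-1}-d_{n,m-1}}, && n\ge0,\ m\ge1, \end{align*} together with the boundary conditions $a_{n,0}=a_n^2(\mu_1)$, $b_{n,0}=0$, $c_{n,0}=b_n(\mu_1)$ for $n\ge0$ and $a_{0,m}=0$, $b_{0,m}=a_m^2(\mu_2)$, $d_{0,m}=b_m(\mu_2)$ for $m\ge0$; that is, these relations and boundary conditions determine all $a_{n,m},b_{n,m},c_{n,m},d_{n,m}$ ($n,m\ge0$) uniquely.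
   Context: Let $\mu_1,\mu_2$ be positive Borel measures on $\mathbb{R}$ with all moments finite, forming a normal system: for every $(n,m)\in\mathbb{N}^2$ there is a unique monic polynomial $P_{n,m}$ of degree $n+m$ with $\int x^kP_{n,m}\,d\mu_1=0$ for $0\le k\le n-1$ and $\int x^kP_{n,m}\,d\mu_2=0$ for $0\le k\le m-1$. Set $P_{n,m}=0$ if $n<0$ or $m<0$. The nearest neighbor recurrence coefficients are defined by \[ xP_{n,m}=P_{n+1,m}+c_{n,m}P_{n,m}+a_{n,m}P_{n-1,m}+b_{n,m}P_{n,m-1},\qquad xP_{n,m}=P_{n,m+1}+d_{n,m}P_{n,m}+a_{n,m}P_{n-1,m}+b_{n,m}P_{n,m-1}, \] with the convention $a_{0,m}=0$ and $b_{n,0}=0$ for the coefficients multiplying zero polynomials. For $i=1,2$, $P_n(x;\mu_i)$ are the monic orthogonal polynomials for $\mu_i$, satisfying $xP_n(x;\mu_i)=P_{n+1}(x;\mu_i)+b_n(\mu_i)P_n(x;\mu_i)+a_n^2(\mu_i)P_{n-1}(x;\mu_i)$ for $n\ge0$, with $P_0=1$, $P_{-1}=0$ and $a_0^2(\mu_i)=0$. (Thus $P_{n,0}=P_n(\cdot;\mu_1)$ and $P_{0,m}=P_m(\cdot;\mu_2)$.) The four displayed relations in the claim are known to hold for the nearest neighbor recurrence coefficients. *)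

theory Defs
  imports "HOL-Analysis.Analysis" "HOL-Computational_Algebra.Polynomial"
begin

definition orth_upto :: "real measure \<Rightarrow> nat \<Rightarrow> real poly \<Rightarrow> bool" where
  "orth_upto \<mu> n p \<longleftrightarrow> (\<forall>k<n. (\<integral>x. x ^ k * poly p x \<partial>\<mu>) = 0)"

definition mop_cond :: "real measure \<Rightarrow> real measure \<Rightarrow> nat \<Rightarrow> nat \<Rightarrow> real poly \<Rightarrow> bool" where
  "mop_cond \<mu>1 \<mu>2 n m p \<longleftrightarrow>
     lead_coeff p = 1 \<and> degree p = n + m \<and> orth_upto \<mu>1 n p \<and> orth_upto \<mu>2 m p"

definition normal_system :: "real measure \<Rightarrow> real measure \<Rightarrow> bool" where
  "normal_system \<mu>1 \<mu>2 \<longleftrightarrow> (\<forall>n m. \<exists>!p. mop_cond \<mu>1 \<mu>2 n m p)"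

definition MOP :: "real measure \<Rightarrow> real measure \<Rightarrow> nat \<Rightarrow> nat \<Rightarrow> real poly" where
  "MOP \<mu>1 \<mu>2 n m = (THE p. mop_cond \<mu>1 \<mu>2 n m p)"

definition OP :: "real measure \<Rightarrow> nat \<Rightarrow> real poly" where
  "OP \<mu> n = (THE p. lead_coeff p = 1 \<and> degree p = n \<and> orth_upto \<mu> n p)"

definition NN_relations ::
  "(nat \<Rightarrow> nat \<Rightarrow> real) \<Rightarrow> (nat \<Rightarrow> nat \<Rightarrow> real) \<Rightarrow> (nat \<Rightarrow> nat \<Rightarrow> real) \<Rightarrow> (nat \<Rightarrow> nat \<Rightarrow> real) \<Rightarrow> bool" where
  "NN_relations a b c d \<longleftrightarrow>
     (\<forall>n m. d (n+1) m - d n m = c n (m+1) - c n m) \<and>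
     (\<forall>n m. a (n+1) m + b (n+1) m - (a n (m+1) + b n (m+1))
            = d (n+1) m * c n m - d n m * c n (m+1)) \<and>
     (\<forall>n m. n \<ge> 1 \<longrightarrow>
            a n (m+1) / a n m = (c n m - d n m) / (c (n-1) m - d (n-1) m)) \<and>
     (\<forall>n m. m \<ge> 1 \<longrightarrow>
            b (n+1) m / b n m = (c n m - d n m) / (c n (m-1) - d n (m-1)))"

(* boundary conditions; al_i n = a_n^2(mu_i), be_i n = b_n(mu_i) *)
definition NN_boundary ::
  "(nat \<Rightarrow> real) \<Rightarrow> (nat \<Rightarrow> real) \<Rightarrow> (nat \<Rightarrow> real) \<Rightarrow> (nat \<Rightarrow> real) \<Rightarrow>
   (nat \<Rightarrow> nat \<Rightarrow> real) \<Rightarrow> (nat \<Rightarrow> nat \<Rightarrow> real) \<Rightarrow> (nat \<Rightarrow> nat \<Rightarrow> real) \<Rightarrow> (nat \<Rightarrow> nat \<Rightarrow> real) \<Rightarrow> bool" where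
  "NN_boundary al1 be1 al2 be2 a b c d \<longleftrightarrow>
     (\<forall>n. a n 0 = al1 n \<and> b n 0 = 0 \<and> c n 0 = be1 n) \<and>
     (\<forall>m. a 0 m = 0 \<and> b 0 m = al2 m \<and> d 0 m = be2 m)"

end

theory Submission
  imports Defs
begin

text \<open>On the boundary the nearest neighbor recurrences reduce to the three-term recurrences of the
marginal orthogonal polynomials, since \<open>P\<^sub>n\<^sub>,\<^sub>0 = P\<^sub>n(\<cdot>;\<mu>\<^sub>1)\<close> and \<open>P\<^sub>0\<^sub>,\<^sub>m = P\<^sub>m(\<cdot>;\<mu>\<^sub>2)\<close>;
comparing coefficients of these monic polynomials of exact degree gives the boundary values.
Inside, the ratio relations propagate \<open>a\<close> along \<open>m\<close> and \<open>b\<close> along \<open>n\<close> (the ratios are nonzero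
because \<open>c \<noteq> d\<close>), and once \<open>a, b\<close> are known on the diagonal \<open>n + m = N + 1\<close>, the first two
relations form a linear system for \<open>d\<^sub>n\<^sub>+\<^sub>1\<^sub>,\<^sub>m\<close> and \<open>c\<^sub>n\<^sub>,\<^sub>m\<^sub>+\<^sub>1\<close> with determinant
\<open>c\<^sub>n\<^sub>,\<^sub>m - d\<^sub>n\<^sub>,\<^sub>m \<noteq> 0\<close>.\<close>

lemma smult_lincomb_cancel:
  fixes P R :: "'a::idom poly"
  assumes "P \<noteq> 0" and "coeff R (degree P) = 0"
    and eq: "smult c P + smult a R = smult c' P + smult a' R"
  shows "c = c'" and "R \<noteq> 0 \<Longrightarrow> a = a'"
proof -
  have "c * lead_coeff P = c' * lead_coeff P"
    using arg_cong[OF eq, of "\<lambda>q. coeff q (degree P)"] assms(2) by simp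
  then show cc: "c = c'"
    using assms(1) by simp
  have "smult (a - a') R = 0"
    using eq unfolding cc by (simp add: smult_diff_left)
  then show "R \<noteq> 0 \<Longrightarrow> a = a'"
    by simp
qed

lemma three_term_recurrence_coeffs_unique:
  fixes p :: "nat \<Rightarrow> 'a::idom poly"
  assumes deg: "\<And>k. degree (p k) = k" and nz: "\<And>k. p k \<noteq> 0"
    and rec: "[:0, 1:] * p n = p (n+1) + smult \<beta> (p n) + smult \<alpha> (if n = 0 then 0 else p (n-1))"
    and rec': "[:0, 1:] * p n = p (n+1) + smult \<beta>' (p n) + smult \<alpha>' (if n = 0 then 0 else p (n-1))"
  shows "\<beta> = \<beta>'" and "0 < n \<Longrightarrow> \<alpha> = \<alpha>'"
proof -
  let ?R = "if n = 0 then 0 else p (n-1)"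
  have low: "coeff ?R (degree (p n)) = 0"
    by (simp add: deg coeff_eq_0)
  have eq: "smult \<beta> (p n) + smult \<alpha> ?R = smult \<beta>' (p n) + smult \<alpha>' ?R"
    using rec rec' by (simp add: add.assoc)
  show "\<beta> = \<beta>'" and "0 < n \<Longrightarrow> \<alpha> = \<alpha>'"
    using smult_lincomb_cancel[OF nz low eq] nz by auto
qed

lemma mop_cond_swap: "mop_cond \<mu>2 \<mu>1 m n p = mop_cond \<mu>1 \<mu>2 n m p"
  unfolding mop_cond_def by (simp add: add.commute conj_ac)

lemma normal_system_swap: "normal_system \<mu>2 \<mu>1 = normal_system \<mu>1 \<mu>2"
  unfolding normal_system_def mop_cond_swap[of \<mu>2 \<mu>1] by (rule all_comm)

lemma MOP_swap: "MOP \<mu>2 \<mu>1 m n = MOP \<mu>1 \<mu>2 n m"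
  unfolding MOP_def mop_cond_swap[of \<mu>2 \<mu>1] ..

lemma mop_cond_MOP:
  assumes "normal_system \<mu>1 \<mu>2"
  shows "mop_cond \<mu>1 \<mu>2 n m (MOP \<mu>1 \<mu>2 n m)"
  using assms unfolding normal_system_def MOP_def by (blast intro: theI')

lemma OP_eq_MOP_left:
  assumes normal: "normal_system \<mu>1 \<mu>2"
  shows "OP \<mu>1 n = MOP \<mu>1 \<mu>2 n 0"
  unfolding OP_def
proof (rule the_equality)
  show "lead_coeff (MOP \<mu>1 \<mu>2 n 0) = 1 \<and> degree (MOP \<mu>1 \<mu>2 n 0) = n \<and> orth_upto \<mu>1 n (MOP \<mu>1 \<mu>2 n 0)"
    using mop_cond_MOP[OF normal, of n 0] unfolding mop_cond_def add_0_right by blast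
next
  fix p
  assume "lead_coeff p = 1 \<and> degree p = n \<and> orth_upto \<mu>1 n p"
  then have "mop_cond \<mu>1 \<mu>2 n 0 p"
    unfolding mop_cond_def orth_upto_def by auto
  then show "p = MOP \<mu>1 \<mu>2 n 0"
    using normal mop_cond_MOP[OF normal] unfolding normal_system_def by blast
qed

lemma OP_eq_MOP_right:
  assumes "normal_system \<mu>1 \<mu>2"
  shows "OP \<mu>2 m = MOP \<mu>1 \<mu>2 0 m"
  using OP_eq_MOP_left[of \<mu>2 \<mu>1] assms by (simp add: normal_system_swap MOP_swap)

lemma OP_degree_nonzero:
  assumes "normal_system \<mu>1 \<mu>2"
  shows "degree (OP \<mu>1 n) = n" and "OP \<mu>1 n \<noteq> 0"
  using mop_cond_MOP[OF assms, of n 0] by (auto simp: OP_eq_MOP_left[OF assms] mop_cond_def)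

text \<open>The hypothesis \<open>z \<noteq> 0\<close> excludes the junk value \<open>x / 0 = 0\<close>.\<close>

lemma ratio_eq_imp_eq_mult:
  fixes x y z :: real
  assumes "x / y = z" and "z \<noteq> 0"
  shows "x = y * z"
  using assms by (cases "y = 0") (auto simp: field_simps)

lemma NN_relations_a_succ:
  assumes "NN_relations a b c d" and "1 \<le> n"
    and "c n m \<noteq> d n m" and "c (n-1) m \<noteq> d (n-1) m"
  shows "a n (m+1) = a n m * ((c n m - d n m) / (c (n-1) m - d (n-1) m))"
  using assms by (intro ratio_eq_imp_eq_mult) (auto simp: NN_relations_def)

lemma NN_relations_b_succ:
  assumes "NN_relations a b c d" and "1 \<le> m"
    and "c n m \<noteq> d n m" and "c n (m-1) \<noteq> d n (m-1)"
  shows "b (n+1) m = b n m * ((c n m - d n m) / (c n (m-1) - d n (m-1)))"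
  using assms by (intro ratio_eq_imp_eq_mult) (auto simp: NN_relations_def)

lemma linear_pair_unique:
  fixes x y x' y' c d :: real
  assumes "x' - y' = x - y" and "c * x' - d * y' = c * x - d * y" and "c \<noteq> d"
  shows "x' = x" and "y' = y"
proof -
  have "(c - d) * (x' - x) = (c * x' - d * y') - (c * x - d * y) + d * ((y' - y) - (x' - x))"
    by (simp add: algebra_simps)
  also have "\<dots> = 0"
    using assms(1,2) by simp
  finally have "(c - d) * (x' - x) = 0" .
  then show "x' = x"
    using assms(3) by simp
  then show "y' = y"
    using assms(1) by simp
qed

lemma NN_relations_cd_succ_unique:
  assumes rel: "NN_relations a b c d" and rel': "NN_relations a' b' c' d'"
    and "c' n m = c n m" "d' n m = d n m"
    and "a' (n+1) m = a (n+1) m" "b' (n+1) m = b (n+1) m"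
    and "a' n (m+1) = a n (m+1)" "b' n (m+1) = b n (m+1)"
    and "c n m \<noteq> d n m"
  shows "d' (n+1) m = d (n+1) m" and "c' n (m+1) = c n (m+1)"
proof -
  have "d (n+1) m - d n m = c n (m+1) - c n m"
    and "a (n+1) m + b (n+1) m - (a n (m+1) + b n (m+1)) = d (n+1) m * c n m - d n m * c n (m+1)"
    and "d' (n+1) m - d' n m = c' n (m+1) - c' n m"
    and "a' (n+1) m + b' (n+1) m - (a' n (m+1) + b' n (m+1))
           = d' (n+1) m * c' n m - d' n m * c' n (m+1)"
    using rel rel' unfolding NN_relations_def by blast+
  then have "d' (n+1) m - c' n (m+1) = d (n+1) m - c n (m+1)"
    and "c n m * d' (n+1) m - d n m * c' n (m+1) = c n m * d (n+1) m - d n m * c n (m+1)"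
    using assms(3-8) by (simp_all add: algebra_simps)
  from linear_pair_unique[OF this assms(9)]
  show "d' (n+1) m = d (n+1) m" and "c' n (m+1) = c n (m+1)" .
qed

lemma NN_relations_unique:
  fixes a b c d a' b' c' d' :: "nat \<Rightarrow> nat \<Rightarrow> real"
  assumes rel: "NN_relations a b c d" and rel': "NN_relations a' b' c' d'"
    and row: "\<And>n. a' n 0 = a n 0 \<and> b' n 0 = b n 0 \<and> c' n 0 = c n 0"
    and col: "\<And>m. a' 0 m = a 0 m \<and> b' 0 m = b 0 m \<and> d' 0 m = d 0 m"
    and cd: "\<And>n m. c n m \<noteq> d n m"
  shows "a' = a \<and> b' = b \<and> c' = c \<and> d' = d"
proof -
  define agree where
    "agree n m \<longleftrightarrow> a' n m = a n m \<and> b' n m = b n m \<and> c' n m = c n m \<and> d' n m = d n m" for n m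
  have "\<forall>n m. n + m = N \<longrightarrow> agree n m" for N
  proof (induction N rule: less_induct)
    case (less N)
    then have IH: "agree n m" if "n + m < N" for n m
      using that by blast
    have cd': "c' n m \<noteq> d' n m" if "n + m < N" for n m
      using IH[OF that] cd by (simp add: agree_def)
    have A: "a' n m = a n m" if "n + m = N" for n m
    proof (cases m)
      case (Suc k)
      show ?thesis
      proof (cases n)
        case (Suc j)
        then have "agree n k" "agree j k"
          using IH that \<open>m = Suc k\<close> by simp_all
        then show ?thesis
          using NN_relations_a_succ[OF rel, of n k] NN_relations_a_succ[OF rel', of n k]
            cd cd'[of n k] cd'[of j k] that \<open>m = Suc k\<close> Suc by (simp add: agree_def)
      qed (use col in simp)
    qed (use row in simp)
    have B: "b' n m = b n m" if "n + m = N" for n m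
    proof (cases n)
      case (Suc j)
      show ?thesis
      proof (cases m)
        case (Suc k)
        then have "agree j m" "agree j k"
          using IH that \<open>n = Suc j\<close> by simp_all
        then show ?thesis
          using NN_relations_b_succ[OF rel, of m j] NN_relations_b_succ[OF rel', of m j]
            cd cd'[of j m] cd'[of j k] that \<open>n = Suc j\<close> Suc by (simp add: agree_def)
      qed (use row in simp)
    qed (use col in simp)
    have CD: "d' (n+1) m = d (n+1) m" "c' n (m+1) = c n (m+1)" if "n + m + 1 = N" for n m
      using NN_relations_cd_succ_unique[OF rel rel', of n m] IH[of n m] A[of "n+1" m] A[of n "m+1"]
        B[of "n+1" m] B[of n "m+1"] cd that by (simp_all add: agree_def)
    show ?case
    proof (intro allI impI)
      fix n m
      assume nm: "n + m = N"
      have "c' n m = c n m"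
        using row CD(2)[of n "m-1"] nm by (cases m) simp_all
      moreover have "d' n m = d n m"
        using col CD(1)[of "n-1" m] nm by (cases n) simp_all
      ultimately show "agree n m"
        using A B nm by (simp add: agree_def)
    qed
  qed
  then show ?thesis
    by (auto simp: agree_def fun_eq_iff)
qed

theorem theorem3p1:
  fixes \<mu>1 \<mu>2 :: "real measure"
    and a b c d :: "nat \<Rightarrow> nat \<Rightarrow> real"
    and al1 be1 al2 be2 :: "nat \<Rightarrow> real"
  assumes borel1: "sets \<mu>1 = sets borel" and borel2: "sets \<mu>2 = sets borel"
    and moments1: "\<forall>k. integrable \<mu>1 (\<lambda>x. x ^ k)"
    and moments2: "\<forall>k. integrable \<mu>2 (\<lambda>x. x ^ k)"
    and normal: "normal_system \<mu>1 \<mu>2"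
    and rec1: "\<forall>n m. [:0, 1:] * MOP \<mu>1 \<mu>2 n m =
                 MOP \<mu>1 \<mu>2 (n+1) m + smult (c n m) (MOP \<mu>1 \<mu>2 n m)
                 + smult (a n m) (if n = 0 then 0 else MOP \<mu>1 \<mu>2 (n-1) m)
                 + smult (b n m) (if m = 0 then 0 else MOP \<mu>1 \<mu>2 n (m-1))"
    and rec2: "\<forall>n m. [:0, 1:] * MOP \<mu>1 \<mu>2 n m =
                 MOP \<mu>1 \<mu>2 n (m+1) + smult (d n m) (MOP \<mu>1 \<mu>2 n m)
                 + smult (a n m) (if n = 0 then 0 else MOP \<mu>1 \<mu>2 (n-1) m)
                 + smult (b n m) (if m = 0 then 0 else MOP \<mu>1 \<mu>2 n (m-1))"
    and conv_a: "\<forall>m. a 0 m = 0" and conv_b: "\<forall>n. b n 0 = 0"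
    and marg1: "\<forall>n. [:0, 1:] * OP \<mu>1 n = OP \<mu>1 (n+1) + smult (be1 n) (OP \<mu>1 n)
                 + smult (al1 n) (if n = 0 then 0 else OP \<mu>1 (n-1))"
    and marg1_0: "al1 0 = 0"
    and marg2: "\<forall>n. [:0, 1:] * OP \<mu>2 n = OP \<mu>2 (n+1) + smult (be2 n) (OP \<mu>2 n)
                 + smult (al2 n) (if n = 0 then 0 else OP \<mu>2 (n-1))"
    and marg2_0: "al2 0 = 0"
    and known: "NN_relations a b c d"
    and cd: "\<forall>n m. c n m \<noteq> d n m"
  shows "NN_boundary al1 be1 al2 be2 a b c d \<and>
         (\<forall>a' b' c' d'. NN_relations a' b' c' d' \<and> NN_boundary al1 be1 al2 be2 a' b' c' d'
            \<longrightarrow> a' = a \<and> b' = b \<and> c' = c \<and> d' = d)"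
proof -
  note OP1 = OP_eq_MOP_left[OF normal, symmetric] and OP2 = OP_eq_MOP_right[OF normal, symmetric]
  have normal': "normal_system \<mu>2 \<mu>1"
    using normal by (simp add: normal_system_swap)
  have row: "c n 0 = be1 n \<and> a n 0 = al1 n" for n
  proof -
    have "[:0, 1:] * OP \<mu>1 n = OP \<mu>1 (n+1) + smult (c n 0) (OP \<mu>1 n)
            + smult (a n 0) (if n = 0 then 0 else OP \<mu>1 (n-1))"
      using rec1[rule_format, of n 0] by (simp add: OP1)
    from three_term_recurrence_coeffs_unique[OF OP_degree_nonzero[OF normal] this marg1[rule_format]]
    show ?thesis
      using conv_a marg1_0 by (cases n) auto
  qed
  have col: "d 0 m = be2 m \<and> b 0 m = al2 m" for m
  proof -
    have "[:0, 1:] * OP \<mu>2 m = OP \<mu>2 (m+1) + smult (d 0 m) (OP \<mu>2 m)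
            + smult (b 0 m) (if m = 0 then 0 else OP \<mu>2 (m-1))"
      using rec2[rule_format, of 0 m] by (simp add: OP2)
    from three_term_recurrence_coeffs_unique[OF OP_degree_nonzero[OF normal'] this marg2[rule_format]]
    show ?thesis
      using conv_b marg2_0 by (cases m) auto
  qed
  have boundary: "NN_boundary al1 be1 al2 be2 a b c d"
    using row col conv_a conv_b by (simp add: NN_boundary_def)
  show ?thesis
    using boundary NN_relations_unique[OF known] cd by (auto simp: NN_boundary_def)
qed

end
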